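(* For positive integers $c,r$ define the graphs $Z_{c,r}$ and $Y_{c,r}$ as follows. $Z_{c,r}$ has vertex set $\{z_{i,j}:1\le i\le c,\ 1\le j\le r\}$, and for $i<i'$, $z_{i,j}z_{i',j'}$ is an edge iff (1) $i$ is odd, $i'=i+1$ and $j>j'$; or (2) $i$ is even, $i'=i+1$ and $j\le j'$; or (3) $i$ is even, $i'$ is odd and $i'\ge i+3$. $Y_{c,r}$ has vertex set $\{y_{i,j}:1\le i\le c,\ 1\le j\le r\}$, and $y_{i,j}y_{i',j'}$ is an edge iff (1) $i$ is odd, $i'=i+1$ and $j\ge j'$; or (2) $i$ is even, $i'=i+1$ and $j<j'$; or (3) $i$ is even, $i'$ is odd and $i'\ge i+3$; or (4) $i$ is odd, $i'=i-1$ and $j=1$. Then for every $n\ge1$: $Z_{2n,2n}$ contains $Y_{n,n}$ as an induced subgraph; $Y_{2n,2n}$ contains $Z_{n,n}$ as an induced subgraph; and moreover $Z_{n,n}$ can be embedded as an induced subgraph in $Y_{2n,2n}$ using none of the vertices $y_{i,1}$ ($1\le i\le 2n$) of the bottom row.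
   Context: In these grids, $i$ indexes columns (left to right) and $j$ indexes rows, row $1$ being the bottom row. *)

theory Defs
  imports Main
begin

definition grid :: "nat \<Rightarrow> nat \<Rightarrow> (nat \<times> nat) set" where
  "grid c r = {(i, j). 1 \<le> i \<and> i \<le> c \<and> 1 \<le> j \<and> j \<le> r}"

definition Zcond :: "nat \<times> nat \<Rightarrow> nat \<times> nat \<Rightarrow> bool" where
  "Zcond v w = (case v of (i, j) \<Rightarrow> case w of (i', j') \<Rightarrow>
      i < i' \<and>
      ((odd i \<and> i' = i + 1 \<and> j > j') \<or>
       (even i \<and> i' = i + 1 \<and> j \<le> j') \<or>
       (even i \<and> odd i' \<and> i' \<ge> i + 3)))"

definition Ycond :: "nat \<times> nat \<Rightarrow> nat \<times> nat \<Rightarrow> bool" where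
  "Ycond v w = (case v of (i, j) \<Rightarrow> case w of (i', j') \<Rightarrow>
      (odd i \<and> i' = i + 1 \<and> j \<ge> j') \<or>
      (even i \<and> i' = i + 1 \<and> j < j') \<or>
      (even i \<and> odd i' \<and> i' \<ge> i + 3) \<or>
      (odd i \<and> i' + 1 = i \<and> j = 1))"

definition Zadj :: "nat \<Rightarrow> nat \<Rightarrow> nat \<times> nat \<Rightarrow> nat \<times> nat \<Rightarrow> bool" where
  "Zadj c r v w = (v \<in> grid c r \<and> w \<in> grid c r \<and> (Zcond v w \<or> Zcond w v))"

definition Yadj :: "nat \<Rightarrow> nat \<Rightarrow> nat \<times> nat \<Rightarrow> nat \<times> nat \<Rightarrow> bool" where
  "Yadj c r v w = (v \<in> grid c r \<and> w \<in> grid c r \<and> (Ycond v w \<or> Ycond w v))"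

definition induced_embedding ::
  "('a \<Rightarrow> 'b) \<Rightarrow> 'a set \<Rightarrow> ('a \<Rightarrow> 'a \<Rightarrow> bool) \<Rightarrow> 'b set \<Rightarrow> ('b \<Rightarrow> 'b \<Rightarrow> bool) \<Rightarrow> bool" where
  "induced_embedding f V E V' E' =
     (inj_on f V \<and> f ` V \<subseteq> V' \<and> (\<forall>u\<in>V. \<forall>v\<in>V. E' (f u) (f v) \<longleftrightarrow> E u v))"

end

theory Submission
  imports Defs
begin

text \<open>Both embeddings keep every column and shear the rows. Sending z(i,j) to y(i,i+j)
  turns the comparisons j > j' and j \<le> j' between consecutive columns into j \<ge> j' and j < j',
  and it never reaches the bottom row, the only place where the extra edges (4) of Y live.
  Conversely, sending y(i,j) with j \<ge> 2 to z(i,j+n-i) undoes the shear; a bottom vertex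
  y(i,1) of an odd column, which is joined to all of column i-1, is moved to z(i+2,1), where
  condition (3) of Z supplies exactly these edges. For n = 1 that target leaves the grid, but
  then a single vertex is to be embedded.\<close>

definition sym_restrict :: "'a set \<Rightarrow> ('a \<Rightarrow> 'a \<Rightarrow> bool) \<Rightarrow> 'a \<Rightarrow> 'a \<Rightarrow> bool" where
  "sym_restrict V P u v \<longleftrightarrow> u \<in> V \<and> v \<in> V \<and> (P u v \<or> P v u)"

lemma Zadj_eq_sym_restrict: "Zadj c r = sym_restrict (grid c r) Zcond"
  by (simp add: fun_eq_iff Zadj_def sym_restrict_def)

lemma Yadj_eq_sym_restrict: "Yadj c r = sym_restrict (grid c r) Ycond"
  by (simp add: fun_eq_iff Yadj_def sym_restrict_def)

lemma induced_embedding_sym_restrict: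
  assumes "inj_on f V" and "f ` V \<subseteq> V'"
    and "\<And>u v. u \<in> V \<Longrightarrow> v \<in> V \<Longrightarrow> (P' (f u) (f v) \<or> P' (f v) (f u)) \<longleftrightarrow> (P u v \<or> P v u)"
  shows "induced_embedding f V (sym_restrict V P) V' (sym_restrict V' P')"
  using assms by (auto simp: induced_embedding_def sym_restrict_def)

lemma induced_embedding_singleton:
  "induced_embedding f {v} (sym_restrict {v} P) V' (sym_restrict V' P')
     \<longleftrightarrow> f v \<in> V' \<and> (P' (f v) (f v) \<longleftrightarrow> P v v)"
  by (auto simp: induced_embedding_def sym_restrict_def)

definition shear :: "nat \<times> nat \<Rightarrow> nat \<times> nat" where
  "shear v = (case v of (i, j) \<Rightarrow> (i, i + j))"

lemma Ycond_shear:
  assumes "1 \<le> j"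
  shows "Ycond (shear (i, j)) (shear (i', j')) \<longleftrightarrow> Zcond (i, j) (i', j')"
  using assms by (auto simp: Ycond_def Zcond_def shear_def)

lemma shear_grid:
  assumes "v \<in> grid n n"
  shows "shear v \<in> grid (2 * n) (2 * n)" and "snd (shear v) \<ge> 2"
  using assms by (auto simp: grid_def shear_def)

lemma induced_embedding_shear:
  "induced_embedding shear (grid n n) (Zadj n n) (grid (2 * n) (2 * n)) (Yadj (2 * n) (2 * n))"
  unfolding Zadj_eq_sym_restrict Yadj_eq_sym_restrict
proof (rule induced_embedding_sym_restrict)
  show "inj_on shear (grid n n)"
    by (auto simp: inj_on_def shear_def)
  show "shear ` grid n n \<subseteq> grid (2 * n) (2 * n)"
    using shear_grid by blast
  fix u v assume "u \<in> grid n n" "v \<in> grid n n"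
  then show "(Ycond (shear u) (shear v) \<or> Ycond (shear v) (shear u)) \<longleftrightarrow> (Zcond u v \<or> Zcond v u)"
    by (auto simp: grid_def Ycond_shear)
qed

definition unshear :: "nat \<Rightarrow> nat \<times> nat \<Rightarrow> nat \<times> nat" where
  "unshear n v = (case v of (i, j) \<Rightarrow>
     if j = 1 then (if odd i then (i + 2, 1) else (i, 1)) else (i, j + n - i))"

lemma Zcond_unshear:
  assumes "(i, j) \<in> grid n n" and "(i', j') \<in> grid n n"
  shows "(Zcond (unshear n (i, j)) (unshear n (i', j')) \<or> Zcond (unshear n (i', j')) (unshear n (i, j)))
     \<longleftrightarrow> (Ycond (i, j) (i', j') \<or> Ycond (i', j') (i, j))"
  using assms unfolding grid_def Ycond_def Zcond_def unshear_def
  by (cases "j = 1"; cases "j' = 1"; cases "even i"; cases "even i'"; auto; presburger)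

lemma unshear_grid:
  assumes "n \<ge> 2" and "v \<in> grid n n"
  shows "unshear n v \<in> grid (2 * n) (2 * n)"
  using assms by (auto simp: grid_def unshear_def split: if_splits)

lemma inj_on_unshear: "inj_on (unshear n) (grid n n)"
  by (auto simp: inj_on_def unshear_def grid_def split: if_splits)

lemma induced_embedding_unshear:
  assumes "n \<ge> 2"
  shows "induced_embedding (unshear n) (grid n n) (Yadj n n) (grid (2 * n) (2 * n)) (Zadj (2 * n) (2 * n))"
  unfolding Zadj_eq_sym_restrict Yadj_eq_sym_restrict
proof (rule induced_embedding_sym_restrict)
  show "inj_on (unshear n) (grid n n)"
    by (rule inj_on_unshear)
  show "unshear n ` grid n n \<subseteq> grid (2 * n) (2 * n)"
    using unshear_grid[OF assms] by blast
  fix u v assume "u \<in> grid n n" "v \<in> grid n n"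
  then show "(Zcond (unshear n u) (unshear n v) \<or> Zcond (unshear n v) (unshear n u))
      \<longleftrightarrow> (Ycond u v \<or> Ycond v u)"
    by (cases u, cases v) (simp only: Zcond_unshear)
qed

theorem lemma10:
  fixes n :: nat
  assumes "n \<ge> 1"
  shows "(\<exists>f. induced_embedding f (grid n n) (Yadj n n) (grid (2*n) (2*n)) (Zadj (2*n) (2*n)))
       \<and> (\<exists>f. induced_embedding f (grid n n) (Zadj n n) (grid (2*n) (2*n)) (Yadj (2*n) (2*n)))
       \<and> (\<exists>f. induced_embedding f (grid n n) (Zadj n n) (grid (2*n) (2*n)) (Yadj (2*n) (2*n))
              \<and> (\<forall>v\<in>grid n n. snd (f v) \<noteq> 1))"
proof -
  have "\<exists>f. induced_embedding f (grid n n) (Yadj n n) (grid (2*n) (2*n)) (Zadj (2*n) (2*n))"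
  proof (cases "n = 1")
    case True
    have "grid 1 1 = {(1, 1)}" by (auto simp: grid_def)
    then have "induced_embedding id (grid 1 1) (Yadj 1 1) (grid 2 2) (Zadj 2 2)"
      by (simp add: Zadj_eq_sym_restrict Yadj_eq_sym_restrict induced_embedding_singleton
          grid_def Ycond_def Zcond_def)
    with True show ?thesis by auto
  next
    case False
    with assms have "n \<ge> 2" by simp
    then show ?thesis using induced_embedding_unshear by blast
  qed
  moreover have "\<forall>v\<in>grid n n. snd (shear v) \<noteq> 1"
    using shear_grid(2) by fastforce
  ultimately show ?thesis
    using induced_embedding_shear by blast
qed

end
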